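(* Let $g(x)=\frac{\sin\log x}{\log x}$ for $0<x<1$ and $g(0)=g(1)=0$. If $\tfrac12<\sigma<1$, then $$\lim_{n\to\infty}\frac{S_{n,\sigma}(g)}{n^{2(1-\sigma)}}=\frac{1}{2(1-\sigma)}\arctan\Big(\frac{1}{1-\sigma}\Big),$$ and more precisely $$\frac{S_{n,\sigma}(g)}{n^{2(1-\sigma)}}=\frac{1}{2(1-\sigma)}\arctan\Big(\frac{1}{1-\sigma}\Big)+O_\sigma\Big(\frac{1}{n^{2(1-\sigma)/3}}\Big).$$
   Context: $S_{n,\sigma}(f)=\sum_{1\le k\le\ell\le n}\frac{1}{(k\ell)^\sigma}f\big(\frac k\ell\big)$. *)

theory Defs
  imports "HOL-Analysis.Analysis" "HOL-Library.Landau_Symbols"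
begin

definition S_sum :: "nat \<Rightarrow> real \<Rightarrow> (real \<Rightarrow> real) \<Rightarrow> real" where
  "S_sum n \<sigma> f = (\<Sum>l\<in>{1..n}. \<Sum>k\<in>{1..l}.
      f (real k / real l) / (real k * real l) powr \<sigma>)"

definition g5 :: "real \<Rightarrow> real" where
  "g5 x = (if 0 < x \<and> x < 1 then sin (ln x) / ln x else 0)"

end

theory Submission
  imports Defs
begin

(* With A_n(s) = sum_{k<=n} k^(-sigma + i s) one has
   |A_n(s)|^2 = sum_{k,l<=n} (k l)^(-sigma) cos (s log (k/l)), and int_0^1 cos (s log x) ds = g(x)
   for 0 < x < 1. Hence int_0^1 |A_n(s)|^2 ds = 2 S_{n,sigma}(g) + sum_{l<=n} l^(-2 sigma), where the
   diagonal sum stays bounded because sigma > 1/2. Comparing A_n(s) with the integral of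
   t^(-sigma + i s) gives A_n(s) = n^(1 - sigma + i s) / (1 - sigma + i s) + O(1) uniformly for
   s in [0,1], so |A_n(s)|^2 = n^(2(1-sigma)) / ((1-sigma)^2 + s^2) + O(n^(1-sigma)), and
   int_0^1 ds / ((1-sigma)^2 + s^2) = arctan (1/(1-sigma)) / (1-sigma). The resulting error
   O(n^(-(1-sigma))) is stronger than the one claimed. *)

lemma norm_diff_le_along_real_segment:
  fixes f f' :: "complex \<Rightarrow> complex"
  assumes "a \<le> b"
    and deriv: "\<And>t. t \<in> {a..b} \<Longrightarrow> (f has_field_derivative f' (of_real t)) (at (of_real t))"
    and bound: "\<And>t. t \<in> {a..b} \<Longrightarrow> norm (f' (of_real t)) \<le> B"
  shows "norm (f (of_real b) - f (of_real a)) \<le> B * (b - a)"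
proof -
  have seg: "closed_segment (of_real a) (of_real b) = complex_of_real ` {a..b}"
    using assms(1) by (simp add: closed_segment_of_real closed_segment_eq_real_ivl)
  have "norm (f (of_real b) - f (of_real a)) \<le> B * norm (complex_of_real b - of_real a)"
  proof (rule field_differentiable_bound[where S = "closed_segment (of_real a) (of_real b)"])
    show "(f has_field_derivative f' z) (at z within closed_segment (of_real a) (of_real b))"
      if "z \<in> closed_segment (of_real a) (of_real b)" for z
      using that deriv unfolding seg by (auto intro: has_field_derivative_at_within)
    show "norm (f' z) \<le> B" if "z \<in> closed_segment (of_real a) (of_real b)" for z
      using that bound unfolding seg by auto
  qed auto
  then show ?thesis
    using assms(1) by (simp flip: of_real_diff)
qed

lemma of_real_powr_eq_cis:
  fixes \<rho> :: complex
  assumes "0 < x"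
  shows "of_real x powr \<rho> = of_real (x powr Re \<rho>) * cis (Im \<rho> * ln x)"
  using assms by (simp add: powr_def Ln_of_real exp_eq_polar powr_def[of x] mult.commute)

lemma norm_of_real_powr: "0 < x \<Longrightarrow> norm (of_real x powr \<rho>) = x powr Re \<rho>"
  by (simp add: of_real_powr_eq_cis norm_mult)

lemma norm_antiderivative_step_minus_powr_le:
  fixes \<rho> :: complex
  assumes "0 < x" "Re \<rho> \<le> 1" "\<rho> \<noteq> -1"
  shows "norm ((of_real (x + 1) powr (\<rho> + 1) - of_real x powr (\<rho> + 1)) / (\<rho> + 1)
                - of_real (x + 1) powr \<rho>) \<le> norm \<rho> * x powr (Re \<rho> - 1)"
proof -
  let ?B = "norm \<rho> * x powr (Re \<rho> - 1)"
  have not_nonpos: "of_real t \<notin> \<real>\<^sub>\<le>\<^sub>0" if "t \<in> {x..x+1}" for t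
    using that assms(1) by (auto simp: complex_nonpos_Reals_iff)
  have decay: "norm (\<rho> * of_real t powr (\<rho> - 1)) \<le> ?B" if "t \<in> {x..x+1}" for t
  proof -
    have "t powr (Re \<rho> - 1) \<le> x powr (Re \<rho> - 1)"
      using that assms by (intro powr_mono2') auto
    then show ?thesis
      using that assms(1) by (simp add: norm_mult norm_of_real_powr mult_left_mono)
  qed
  have nonzero: "\<rho> + 1 \<noteq> 0"
    using assms(3) by (metis add_eq_0_iff2)
  have "norm (of_real (x + 1) powr \<rho> - of_real t powr \<rho>) \<le> ?B" if "t \<in> {x..x+1}" for t
  proof -
    have "norm (of_real (x + 1) powr \<rho> - of_real t powr \<rho>) \<le> ?B * (x + 1 - t)"
      using that not_nonpos decay
      by (intro norm_diff_le_along_real_segment[where f' = "\<lambda>z. \<rho> * z powr (\<rho> - 1)"])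
         (auto intro: has_field_derivative_powr)
    also have "\<dots> \<le> ?B"
      using that by (intro mult_left_le) auto
    finally show ?thesis .
  qed
  then have "norm ((of_real (x + 1) powr (\<rho> + 1) / (\<rho> + 1) - of_real (x + 1) powr \<rho> * of_real (x + 1))
                 - (of_real x powr (\<rho> + 1) / (\<rho> + 1) - of_real (x + 1) powr \<rho> * of_real x))
               \<le> ?B * (x + 1 - x)"
    using not_nonpos nonzero
    by (intro norm_diff_le_along_real_segment[where f' = "\<lambda>z. z powr \<rho> - of_real (x + 1) powr \<rho>"])
       (auto intro!: derivative_eq_intros simp: norm_minus_commute)
  then show ?thesis
    by (simp add: algebra_simps diff_divide_distrib)
qed

lemma sum_real_powr_le_suminf:
  assumes "finite A" "p < -1"
  shows "(\<Sum>k\<in>A. real k powr p) \<le> (\<Sum>k. real k powr p)"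
  using assms by (intro sum_le_suminf) (auto simp: summable_real_powr_iff)

lemma norm_sum_powr_minus_antiderivative_le:
  fixes \<rho> :: complex
  assumes "Re \<rho> < 0" "\<rho> \<noteq> -1" "1 \<le> n"
  shows "norm ((\<Sum>k=1..n. of_nat k powr \<rho>) - of_nat n powr (\<rho> + 1) / (\<rho> + 1))
           \<le> norm \<rho> * (1 / norm (\<rho> + 1) + (\<Sum>k. real k powr (Re \<rho> - 1)))"
proof -
  define E where "E n = (\<Sum>k=1..n. of_nat k powr \<rho>) - of_nat n powr (\<rho> + 1) / (\<rho> + 1)" for n
  have nonzero: "\<rho> + 1 \<noteq> 0"
    using assms(2) by (metis add_eq_0_iff2)
  have partial: "norm (E n) \<le> norm \<rho> * (1 / norm (\<rho> + 1) + (\<Sum>k<n. real k powr (Re \<rho> - 1)))"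
    if "1 \<le> n" for n
    using that
  proof (induction n rule: nat_induct_at_least)
    case base
    have "E 1 = \<rho> / (\<rho> + 1)"
      using nonzero by (simp add: E_def field_simps)
    then show ?case
      by (simp add: norm_divide)
  next
    case (Suc n)
    have "E (Suc n) = E n - ((of_real (real n + 1) powr (\<rho> + 1) - of_real (real n) powr (\<rho> + 1))
                               / (\<rho> + 1) - of_real (real n + 1) powr \<rho>)"
      by (simp add: E_def algebra_simps diff_divide_distrib)
    also have "norm \<dots> \<le> norm (E n) + norm \<rho> * real n powr (Re \<rho> - 1)"
      using Suc.hyps assms
      by (intro norm_triangle_le_diff add_left_mono norm_antiderivative_step_minus_powr_le) auto
    also have "\<dots> \<le> norm \<rho> * (1 / norm (\<rho> + 1) + (\<Sum>k<Suc n. real k powr (Re \<rho> - 1)))"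
      using Suc.IH by (simp add: algebra_simps)
    finally show ?case .
  qed
  have "(\<Sum>k<n. real k powr (Re \<rho> - 1)) \<le> (\<Sum>k. real k powr (Re \<rho> - 1))"
    using assms(1) by (intro sum_real_powr_le_suminf) auto
  then have "norm (E n) \<le> norm \<rho> * (1 / norm (\<rho> + 1) + (\<Sum>k. real k powr (Re \<rho> - 1)))"
    using partial[OF assms(3)] by (meson add_left_mono mult_left_mono norm_ge_zero order_trans)
  then show ?thesis
    by (simp add: E_def)
qed

lemma has_integral_01_of_derivative:
  fixes F f :: "real \<Rightarrow> real"
  assumes "\<And>s. (F has_real_derivative f s) (at s)"
  shows "(f has_integral (F 1 - F 0)) {0..1}"
  using assms
  by (intro fundamental_theorem_of_calculus)
     (auto simp: has_real_derivative_iff_has_vector_derivative[symmetric]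
           intro: has_field_derivative_at_within)

lemma has_integral_cos_ln_01:
  assumes "0 < x" "x \<le> 1"
  shows "((\<lambda>s. cos (s * ln x)) has_integral g5 x + of_bool (x = 1)) {0..1}"
proof (cases "x = 1")
  case True
  then show ?thesis
    using has_integral_const_real[of 1 0 1] by (simp add: g5_def)
next
  case False
  then have "ln x \<noteq> 0" "g5 x = sin (ln x) / ln x"
    using assms by (auto simp: g5_def)
  moreover have "((\<lambda>s. sin (s * ln x) / ln x) has_real_derivative cos (s * ln x)) (at s)" for s
    using \<open>ln x \<noteq> 0\<close> by (auto intro!: derivative_eq_intros)
  ultimately show ?thesis
    using False has_integral_01_of_derivative by fastforce
qed

lemma has_integral_inverse_sum_squares_01:
  fixes a :: real
  assumes "0 < a"
  shows "((\<lambda>s. 1 / (a\<^sup>2 + s\<^sup>2)) has_integral arctan (1 / a) / a) {0..1}"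
proof -
  have "((\<lambda>s. arctan (s / a) / a) has_real_derivative 1 / (a\<^sup>2 + s\<^sup>2)) (at s)" for s
  proof -
    have "0 < a * (a * a) + a * (s * s)"
      using assms by (simp add: add_pos_nonneg)
    then have "inverse (1 + (s / a)\<^sup>2) * (1 / a) / a = 1 / (a\<^sup>2 + s\<^sup>2)"
      using assms by (simp add: field_simps power2_eq_square)
    then show ?thesis
      using assms by (auto intro!: derivative_eq_intros)
  qed
  from has_integral_01_of_derivative[OF this] show ?thesis
    by simp
qed

lemma Re_of_real_powr_mult_cnj:
  fixes \<rho> :: complex
  assumes "0 < x" "0 < y"
  shows "Re (of_real x powr \<rho> * cnj (of_real y powr \<rho>))
           = (x * y) powr Re \<rho> * cos (Im \<rho> * ln (x / y))"
  using assms
  by (simp add: of_real_powr_eq_cis cis_cnj cis_mult powr_mult ln_div algebra_simps)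

lemma sum_square_symmetric:
  fixes h :: "nat \<Rightarrow> nat \<Rightarrow> 'a::ring_1"
  assumes "\<And>k l. h k l = h l k"
  shows "(\<Sum>k=1..n. \<Sum>l=1..n. h k l) = 2 * (\<Sum>l=1..n. \<Sum>k=1..l. h k l) - (\<Sum>l=1..n. h l l)"
proof (induction n)
  case (Suc n)
  have "(\<Sum>k=1..Suc n. \<Sum>l=1..Suc n. h k l) = (\<Sum>k=1..n. \<Sum>l=1..n. h k l)
          + 2 * (\<Sum>k=1..n. h k (Suc n)) + h (Suc n) (Suc n)"
    using assms by (simp add: sum.distrib mult_2)
  then show ?case
    using Suc.IH by (simp add: algebra_simps mult_2)
qed simp

lemma norm_sum_powr_sq_eq_double_sum:
  fixes \<sigma> s :: real
  shows "(norm (\<Sum>k=1..n. of_nat k powr Complex (-\<sigma>) s))\<^sup>2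
           = (\<Sum>k=1..n. \<Sum>l=1..n. cos (s * ln (real k / real l)) / (real k * real l) powr \<sigma>)"
proof -
  let ?A = "\<Sum>k=1..n. of_nat k powr Complex (-\<sigma>) s"
  have "(norm ?A)\<^sup>2 = Re (?A * cnj ?A)"
    by (metis Re_complex_of_real complex_norm_square)
  also have "\<dots> = (\<Sum>k=1..n. \<Sum>l=1..n.
                       Re (of_nat k powr Complex (-\<sigma>) s * cnj (of_nat l powr Complex (-\<sigma>) s)))"
    by (simp add: cnj_sum sum_product Re_sum)
  also have "\<dots> = (\<Sum>k=1..n. \<Sum>l=1..n. cos (s * ln (real k / real l)) / (real k * real l) powr \<sigma>)"
  proof (intro sum.cong refl)
    fix k l assume "k \<in> {1..n}" "l \<in> {1..n}"
    then show "Re (of_nat k powr Complex (-\<sigma>) s * cnj (of_nat l powr Complex (-\<sigma>) s))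
                 = cos (s * ln (real k / real l)) / (real k * real l) powr \<sigma>"
      using Re_of_real_powr_mult_cnj[of "real k" "real l" "Complex (-\<sigma>) s"]
      by (simp add: powr_minus_divide)
  qed
  finally show ?thesis .
qed

lemma has_integral_norm_sum_powr_sq:
  fixes \<sigma> :: real
  shows "((\<lambda>s. (norm (\<Sum>k=1..n. of_nat k powr Complex (-\<sigma>) s))\<^sup>2)
           has_integral 2 * S_sum n \<sigma> g5 + (\<Sum>l=1..n. real l powr (-2 * \<sigma>))) {0..1}"
proof -
  define h where "h s k l = cos (s * ln (real k / real l)) / (real k * real l) powr \<sigma>" for s k l
  define D where "D = (\<Sum>l=1..n. real l powr (-2 * \<sigma>))"
  have square_weight: "1 / (real l * real l) powr \<sigma> = real l powr (-2 * \<sigma>)" for l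
    by (simp add: powr_mult powr_minus_divide powr_add[symmetric])
  have diagonal: "(\<Sum>l=1..n. h s l l) = D" for s
    by (auto simp: h_def D_def square_weight intro!: sum.cong)
  have pair_integral: "((\<lambda>s. h s k l) has_integral
                         (g5 (real k / real l) + of_bool (k = l)) / (real k * real l) powr \<sigma>) {0..1}"
    if "1 \<le> k" "k \<le> l" for k l
  proof -
    have ratio: "0 < real k / real l" "real k / real l \<le> 1" "real k / real l = 1 \<longleftrightarrow> k = l"
      using that by auto
    show ?thesis
      using has_integral_divide[OF has_integral_cos_ln_01[OF ratio(1,2)],
                                of "(real k * real l) powr \<sigma>"]
      unfolding h_def ratio(3) .
  qed
  have weights: "(\<Sum>l=1..n. \<Sum>k=1..l.
                     (g5 (real k / real l) + of_bool (k = l)) / (real k * real l) powr \<sigma>)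
                   = S_sum n \<sigma> g5 + D"
  proof -
    have "(\<Sum>k=1..l. of_bool (k = l) / (real k * real l) powr \<sigma>)
            = (\<Sum>k=1..l. if k = l then 1 / (real l * real l) powr \<sigma> else 0)" for l
      by (intro sum.cong) auto
    then have "(\<Sum>k=1..l. of_bool (k = l) / (real k * real l) powr \<sigma>) = real l powr (-2 * \<sigma>)"
      if "1 \<le> l" for l
      using that by (simp add: square_weight)
    then show ?thesis
      by (simp add: S_sum_def D_def add_divide_distrib sum.distrib)
  qed
  have "((\<lambda>s. \<Sum>l=1..n. \<Sum>k=1..l. h s k l) has_integral S_sum n \<sigma> g5 + D) {0..1}"
    unfolding weights[symmetric] using pair_integral by (intro has_integral_sum) auto
  then have H_integral:
      "((\<lambda>s. 2 * (\<Sum>l=1..n. \<Sum>k=1..l. h s k l) - D) has_integral 2 * S_sum n \<sigma> g5 + D) {0..1}"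
    using has_integral_const_real[of D 0 1]
    by (intro has_integral_eq_rhs[OF has_integral_diff[OF has_integral_mult_right]]) auto
  have square_eq: "(norm (\<Sum>k=1..n. of_nat k powr Complex (-\<sigma>) s))\<^sup>2
                     = 2 * (\<Sum>l=1..n. \<Sum>k=1..l. h s k l) - D" for s
  proof -
    have "h s k l = h s l k" for k l
      unfolding h_def by (metis cos_minus inverse_divide ln_inverse mult.commute mult_minus_right)
    then show ?thesis
      unfolding norm_sum_powr_sq_eq_double_sum diagonal[symmetric, of s]
      by (simp only: h_def[symmetric] sum_square_symmetric)
  qed
  from H_integral show ?thesis
    unfolding D_def[symmetric] square_eq .
qed

lemma norm_sum_powr_Complex_minus_antiderivative_le:
  assumes "0 < \<sigma>" "\<sigma> < 1" "\<bar>s\<bar> \<le> 1" "1 \<le> n"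
  shows "norm ((\<Sum>k=1..n. of_nat k powr Complex (-\<sigma>) s)
                - of_nat n powr Complex (1 - \<sigma>) s / Complex (1 - \<sigma>) s)
           \<le> 2 * (1 / (1 - \<sigma>) + (\<Sum>k. real k powr (-\<sigma> - 1)))"
proof -
  define \<rho> where "\<rho> = Complex (-\<sigma>) s"
  have shift: "\<rho> + 1 = Complex (1 - \<sigma>) s"
    by (simp add: \<rho>_def complex_eq_iff)
  have "\<rho> \<noteq> -1"
    using assms(2) by (auto simp: \<rho>_def complex_eq_iff)
  then have "norm ((\<Sum>k=1..n. of_nat k powr \<rho>) - of_nat n powr (\<rho> + 1) / (\<rho> + 1))
               \<le> norm \<rho> * (1 / norm (\<rho> + 1) + (\<Sum>k. real k powr (-\<sigma> - 1)))"
    using norm_sum_powr_minus_antiderivative_le[of \<rho> n] assms by (simp add: \<rho>_def)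
  also have "\<dots> \<le> 2 * (1 / (1 - \<sigma>) + (\<Sum>k. real k powr (-\<sigma> - 1)))"
  proof (intro mult_mono add_right_mono frac_le add_nonneg_nonneg)
    show "norm \<rho> \<le> 2"
      using cmod_le[of \<rho>] assms by (simp add: \<rho>_def)
    show "1 - \<sigma> \<le> norm (\<rho> + 1)"
      using abs_Re_le_cmod[of "\<rho> + 1"] by (simp add: shift)
    show "0 \<le> (\<Sum>k. real k powr (-\<sigma> - 1))"
      using assms by (intro suminf_nonneg) (auto simp: summable_real_powr_iff)
  qed (use assms in auto)
  finally show ?thesis
    by (simp only: shift) (simp only: \<rho>_def)
qed

lemma abs_square_diff_le:
  fixes x y c :: real
  assumes "\<bar>x - y\<bar> \<le> c" "0 \<le> x" "0 \<le> y"
  shows "\<bar>x\<^sup>2 - y\<^sup>2\<bar> \<le> c * (2 * y + c)"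
proof -
  have "x\<^sup>2 - y\<^sup>2 = (x - y) * (x + y)"
    by (simp add: power2_eq_square algebra_simps)
  then have "\<bar>x\<^sup>2 - y\<^sup>2\<bar> = \<bar>x - y\<bar> * (x + y)"
    using assms by (simp add: abs_mult)
  also have "\<dots> \<le> c * (2 * y + c)"
    using assms by (intro mult_mono) auto
  finally show ?thesis .
qed

lemma norm_sum_powr_sq_approx:
  fixes \<sigma> :: real
  assumes "0 < \<sigma>" "\<sigma> < 1"
  obtains K where "0 \<le> K"
    and "\<And>n s. 1 \<le> n \<Longrightarrow> s \<in> {0..1} \<Longrightarrow>
           \<bar>(norm (\<Sum>k=1..n. of_nat k powr Complex (-\<sigma>) s))\<^sup>2
              - real n powr (2 * (1 - \<sigma>)) / ((1 - \<sigma>)\<^sup>2 + s\<^sup>2)\<bar> \<le> K * real n powr (1 - \<sigma>)"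
proof
  define C where "C = 2 * (1 / (1 - \<sigma>) + (\<Sum>k. real k powr (-\<sigma> - 1)))"
  have "0 \<le> (\<Sum>k. real k powr (-\<sigma> - 1))"
    using assms by (intro suminf_nonneg) (auto simp: summable_real_powr_iff)
  then have "0 \<le> C"
    using assms by (simp add: C_def)
  then show "0 \<le> C * (2 / (1 - \<sigma>) + C)"
    using assms by simp
  fix n :: nat and s :: real
  assume "1 \<le> n" "s \<in> {0..1}"
  define A where "A = (\<Sum>k=1..n. of_nat k powr Complex (-\<sigma>) s)"
  define M where "M = of_nat n powr Complex (1 - \<sigma>) s / Complex (1 - \<sigma>) s"
  define m where "m = real n powr (1 - \<sigma>)"
  have "1 \<le> m"
    using \<open>1 \<le> n\<close> assms by (simp add: m_def ge_one_powr_ge_zero)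
  have norm_M: "norm M = m / norm (Complex (1 - \<sigma>) s)"
    using \<open>1 \<le> n\<close> norm_of_real_powr[of "real n" "Complex (1 - \<sigma>) s"]
    by (simp add: M_def m_def norm_divide)
  have "m\<^sup>2 = real n powr (2 * (1 - \<sigma>))"
    by (simp add: m_def power2_eq_square powr_add[symmetric])
  then have M_square: "(norm M)\<^sup>2 = real n powr (2 * (1 - \<sigma>)) / ((1 - \<sigma>)\<^sup>2 + s\<^sup>2)"
    by (simp add: norm_M power_divide cmod_power2)
  have M_le: "norm M \<le> m / (1 - \<sigma>)"
    unfolding norm_M using abs_Re_le_cmod[of "Complex (1 - \<sigma>) s"] \<open>1 \<le> m\<close> assms
    by (intro divide_left_mono) (auto intro!: mult_pos_pos)
  have "\<bar>norm A - norm M\<bar> \<le> C"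
    using norm_sum_powr_Complex_minus_antiderivative_le[of \<sigma> s n] norm_triangle_ineq3[of A M]
      assms \<open>1 \<le> n\<close> \<open>s \<in> {0..1}\<close>
    by (simp add: A_def M_def C_def)
  then have "\<bar>(norm A)\<^sup>2 - (norm M)\<^sup>2\<bar> \<le> C * (2 * norm M + C)"
    by (rule abs_square_diff_le) auto
  also have "\<dots> \<le> C * (2 * (m / (1 - \<sigma>)) + C * m)"
    using M_le \<open>0 \<le> C\<close> \<open>1 \<le> m\<close>
    by (intro mult_left_mono add_mono) (auto simp: mult_le_cancel_left1)
  also have "\<dots> = C * (2 / (1 - \<sigma>) + C) * m"
    by (simp add: algebra_simps)
  finally show "\<bar>(norm A)\<^sup>2 - real n powr (2 * (1 - \<sigma>)) / ((1 - \<sigma>)\<^sup>2 + s\<^sup>2)\<bar>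
                  \<le> C * (2 / (1 - \<sigma>) + C) * real n powr (1 - \<sigma>)"
    by (simp add: M_square m_def)
qed

lemma S_sum_g5_approx:
  fixes \<sigma> :: real
  assumes "0 < \<sigma>" "\<sigma> < 1"
  obtains K where "\<And>n. 1 \<le> n \<Longrightarrow>
    \<bar>2 * S_sum n \<sigma> g5 + (\<Sum>l=1..n. real l powr (-2 * \<sigma>))
       - real n powr (2 * (1 - \<sigma>)) * (arctan (1 / (1 - \<sigma>)) / (1 - \<sigma>))\<bar> \<le> K * real n powr (1 - \<sigma>)"
proof -
  obtain K where "0 \<le> K" and K: "\<And>n s. 1 \<le> n \<Longrightarrow> s \<in> {0..1} \<Longrightarrow>
           \<bar>(norm (\<Sum>k=1..n. of_nat k powr Complex (-\<sigma>) s))\<^sup>2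
              - real n powr (2 * (1 - \<sigma>)) / ((1 - \<sigma>)\<^sup>2 + s\<^sup>2)\<bar> \<le> K * real n powr (1 - \<sigma>)"
    using norm_sum_powr_sq_approx[OF assms] by blast
  show thesis
  proof
    fix n :: nat
    assume "1 \<le> n"
    let ?N = "real n powr (2 * (1 - \<sigma>))"
    have "((\<lambda>s. (norm (\<Sum>k=1..n. of_nat k powr Complex (-\<sigma>) s))\<^sup>2 - ?N * (1 / ((1 - \<sigma>)\<^sup>2 + s\<^sup>2)))
            has_integral (2 * S_sum n \<sigma> g5 + (\<Sum>l=1..n. real l powr (-2 * \<sigma>)))
                         - ?N * (arctan (1 / (1 - \<sigma>)) / (1 - \<sigma>))) {0..1}"
      using assms
      by (intro has_integral_diff has_integral_mult_right has_integral_norm_sum_powr_sq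
                has_integral_inverse_sum_squares_01) auto
    from has_integral_bound_real[OF _ finite.emptyI this, of "K * real n powr (1 - \<sigma>)"]
    show "\<bar>2 * S_sum n \<sigma> g5 + (\<Sum>l=1..n. real l powr (-2 * \<sigma>))
            - ?N * (arctan (1 / (1 - \<sigma>)) / (1 - \<sigma>))\<bar> \<le> K * real n powr (1 - \<sigma>)"
      using K[OF \<open>1 \<le> n\<close>] \<open>0 \<le> K\<close> by auto
  qed
qed

lemma S_sum_g5_normalized_error_bigo:
  fixes \<sigma> :: real
  assumes "1/2 < \<sigma>" "\<sigma> < 1"
  shows "(\<lambda>n. S_sum n \<sigma> g5 / real n powr (2 * (1 - \<sigma>)) - arctan (1 / (1 - \<sigma>)) / (2 * (1 - \<sigma>)))
           \<in> O(\<lambda>n. real n powr - (1 - \<sigma>))"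
proof -
  obtain K where K: "\<And>n. 1 \<le> n \<Longrightarrow>
    \<bar>2 * S_sum n \<sigma> g5 + (\<Sum>l=1..n. real l powr (-2 * \<sigma>))
       - real n powr (2 * (1 - \<sigma>)) * (arctan (1 / (1 - \<sigma>)) / (1 - \<sigma>))\<bar> \<le> K * real n powr (1 - \<sigma>)"
    using S_sum_g5_approx[of \<sigma>] assms by auto
  define Z where "Z = (\<Sum>l. real l powr (-2 * \<sigma>))"
  have "\<bar>S_sum n \<sigma> g5 / real n powr (2 * (1 - \<sigma>)) - arctan (1 / (1 - \<sigma>)) / (2 * (1 - \<sigma>))\<bar>
          \<le> (K + Z) / 2 * real n powr - (1 - \<sigma>)" if "1 \<le> n" for n
  proof -
    define m where "m = real n powr (1 - \<sigma>)"
    define D where "D = (\<Sum>l=1..n. real l powr (-2 * \<sigma>))"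
    define T where "T = arctan (1 / (1 - \<sigma>)) / (1 - \<sigma>)"
    have "1 \<le> m"
      using that assms by (simp add: m_def ge_one_powr_ge_zero)
    have N: "real n powr (2 * (1 - \<sigma>)) = m * m"
      by (simp add: m_def powr_add[symmetric])
    have "0 \<le> D" "D \<le> Z"
      using sum_real_powr_le_suminf[of "{1..n}" "-2 * \<sigma>"] assms
      by (auto simp: D_def Z_def intro: sum_nonneg)
    then have "\<bar>2 * S_sum n \<sigma> g5 - m * m * T\<bar> \<le> K * m + Z * m"
      using K[OF that] \<open>1 \<le> m\<close> mult_left_mono[OF \<open>1 \<le> m\<close>, of Z]
      unfolding D_def T_def m_def N[symmetric, unfolded m_def] by (simp add: abs_le_iff)
    then have "\<bar>S_sum n \<sigma> g5 / (m * m) - T / 2\<bar> \<le> (K + Z) * m / (2 * (m * m))"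
      using \<open>1 \<le> m\<close> by (simp add: field_simps abs_divide)
    also have "\<dots> = (K + Z) / 2 * (1 / m)"
      using \<open>1 \<le> m\<close> by (simp add: field_simps)
    finally have bound: "\<bar>S_sum n \<sigma> g5 / (m * m) - T / 2\<bar> \<le> (K + Z) / 2 * (1 / m)" .
    have half: "arctan (1 / (1 - \<sigma>)) / (2 * (1 - \<sigma>)) = T / 2"
      by (simp add: T_def)
    have inverse_m: "real n powr - (1 - \<sigma>) = 1 / m"
      unfolding m_def by (rule powr_minus_divide)
    show ?thesis
      unfolding N half inverse_m by (fact bound)
  qed
  then show ?thesis
    by (intro bigoI[where c = "(K + Z) / 2"] eventually_mono[OF eventually_ge_at_top[of 1]]) simp
qed

theorem theorem5p4:
  fixes \<sigma> :: real
  assumes "1/2 < \<sigma>" and "\<sigma> < 1"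
  shows "((\<lambda>n. S_sum n \<sigma> g5 / real n powr (2 * (1 - \<sigma>)))
            \<longlongrightarrow> arctan (1 / (1 - \<sigma>)) / (2 * (1 - \<sigma>))) at_top
       \<and> (\<lambda>n. S_sum n \<sigma> g5 / real n powr (2 * (1 - \<sigma>))
               - arctan (1 / (1 - \<sigma>)) / (2 * (1 - \<sigma>)))
           \<in> O(\<lambda>n. 1 / real n powr (2 * (1 - \<sigma>) / 3))"
proof
  let ?E = "\<lambda>n. S_sum n \<sigma> g5 / real n powr (2 * (1 - \<sigma>)) - arctan (1 / (1 - \<sigma>)) / (2 * (1 - \<sigma>))"
  have error: "?E \<in> O(\<lambda>n. real n powr - (1 - \<sigma>))"
    using S_sum_g5_normalized_error_bigo[OF assms] .
  have "(\<lambda>n. real n powr - (1 - \<sigma>)) \<in> o(\<lambda>n. real n powr - (2 * (1 - \<sigma>) / 3))"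
    using assms by (subst powr_smallo_iff) (auto simp: filterlim_real_sequentially field_simps)
  from landau_o.big_small_trans'[OF error this]
  show "?E \<in> O(\<lambda>n. 1 / real n powr (2 * (1 - \<sigma>) / 3))"
    by (simp add: powr_minus_divide)
  have "(\<lambda>n. real n powr - (1 - \<sigma>)) \<in> o(\<lambda>_. 1)"
    using assms
    by (intro smalloI_tendsto) (auto intro!: tendsto_neg_powr filterlim_real_sequentially)
  from smalloD_tendsto[OF landau_o.big_small_trans[OF error this]]
  have "(?E \<longlongrightarrow> 0) at_top"
    by simp
  then show "((\<lambda>n. S_sum n \<sigma> g5 / real n powr (2 * (1 - \<sigma>)))
               \<longlongrightarrow> arctan (1 / (1 - \<sigma>)) / (2 * (1 - \<sigma>))) at_top"
    by (rule LIM_zero_cancel)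
qed

end
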